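(* Let $n\ge 2$ and let $B$ be an $n\times n$ agreement matrix. Then $IA_\epsilon(B)$ exists. Moreover, if $l$ and $m$ are the numbers of non-null columns and non-null rows of $B$ respectively, then $$IA_\epsilon(B)=\begin{cases}\frac{n-l}{n}&\text{if }H(Y_B^+)=0,\\[2pt] \frac{n-m}{n}&\text{if }H(X_B^+)=0,\\[2pt] 1+\frac{H(Y_B^+)-H((X_BY_B)^+)}{H(X_B^+)}&\text{if }0<H(X_B^+)\le H(Y_B^+),\\[2pt] 1+\frac{H(X_B^+)-H((X_BY_B)^+)}{H(Y_B^+)}&\text{if }0<H(Y_B^+)\le H(X_B^+).\end{cases}$$
   Context: An $n\times n$ agreement matrix $B$ has nonnegative entries $B[y][x]$ (row $y$, column $x$), not all zero. A row (column) is non-null if not all of its entries are $0$. For any $n\times n$ matrix $M$ with nonnegative real entries not all zero, let $S_M=\sum_{y,x}M[y][x]$ and define random variables $X_M$ on $\{1,\dots,n\}$ with $P(X_M=x)=\sum_yM[y][x]/S_M$, $Y_M$ with $P(Y_M=y)=\sum_xM[y][x]/S_M$, and the joint variable $X_MY_M$ with $P(X_MY_M=(y,x))=M[y][x]/S_M$. $H$ is Shannon entropy in base 2, defined only when all probabilities are positive. The information agreement is $IA(M)=\frac{H(X_M)+H(Y_M)-H(X_MY_M)}{\min\{H(X_M),H(Y_M)\}}$. For $\epsilon>0$, the $0$-freed matrix $B_\epsilon$ is obtained from $B$ by replacing every zero entry by $\epsilon$, and $IA_\epsilon(B)=\lim_{\epsilon\to0^+}IA(B_\epsilon)$. For a random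 variable $Z$, the refined variable $Z^+$ is $Z$ restricted to values of positive probability, with $H(Z^+)=-\sum_{z:\,p_Z(z)>0}p_Z(z)\log_2p_Z(z)$. *)

theory Defs
  imports Complex_Main
begin

text \<open>Matrices are functions M :: nat => nat => real, M y x = entry in row y, column x,
  with indices y, x ranging over {..<n} (0-based rendering of {1..n}).\<close>

definition msum :: "nat \<Rightarrow> (nat \<Rightarrow> nat \<Rightarrow> real) \<Rightarrow> real" where
  "msum n M = (\<Sum>y<n. \<Sum>x<n. M y x)"

definition pX :: "nat \<Rightarrow> (nat \<Rightarrow> nat \<Rightarrow> real) \<Rightarrow> nat \<Rightarrow> real" where
  "pX n M x = (\<Sum>y<n. M y x) / msum n M"

definition pY :: "nat \<Rightarrow> (nat \<Rightarrow> nat \<Rightarrow> real) \<Rightarrow> nat \<Rightarrow> real" where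
  "pY n M y = (\<Sum>x<n. M y x) / msum n M"

definition pXY :: "nat \<Rightarrow> (nat \<Rightarrow> nat \<Rightarrow> real) \<Rightarrow> nat \<times> nat \<Rightarrow> real" where
  "pXY n M yx = M (fst yx) (snd yx) / msum n M"

definition entropy :: "'a set \<Rightarrow> ('a \<Rightarrow> real) \<Rightarrow> real" where
  "entropy A p = - (\<Sum>a\<in>A. p a * log 2 (p a))"

text \<open>Entropy of the refined variable Z^+: sum restricted to positive-probability values.\<close>
definition entropy_plus :: "'a set \<Rightarrow> ('a \<Rightarrow> real) \<Rightarrow> real" where
  "entropy_plus A p = - (\<Sum>a\<in>{a\<in>A. p a > 0}. p a * log 2 (p a))"

definition HX :: "nat \<Rightarrow> (nat \<Rightarrow> nat \<Rightarrow> real) \<Rightarrow> real" where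
  "HX n M = entropy {..<n} (pX n M)"
definition HY :: "nat \<Rightarrow> (nat \<Rightarrow> nat \<Rightarrow> real) \<Rightarrow> real" where
  "HY n M = entropy {..<n} (pY n M)"
definition HXY :: "nat \<Rightarrow> (nat \<Rightarrow> nat \<Rightarrow> real) \<Rightarrow> real" where
  "HXY n M = entropy ({..<n} \<times> {..<n}) (pXY n M)"

definition HX_plus :: "nat \<Rightarrow> (nat \<Rightarrow> nat \<Rightarrow> real) \<Rightarrow> real" where
  "HX_plus n M = entropy_plus {..<n} (pX n M)"
definition HY_plus :: "nat \<Rightarrow> (nat \<Rightarrow> nat \<Rightarrow> real) \<Rightarrow> real" where
  "HY_plus n M = entropy_plus {..<n} (pY n M)"
definition HXY_plus :: "nat \<Rightarrow> (nat \<Rightarrow> nat \<Rightarrow> real) \<Rightarrow> real" where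
  "HXY_plus n M = entropy_plus ({..<n} \<times> {..<n}) (pXY n M)"

definition IA :: "nat \<Rightarrow> (nat \<Rightarrow> nat \<Rightarrow> real) \<Rightarrow> real" where
  "IA n M = (HX n M + HY n M - HXY n M) / min (HX n M) (HY n M)"

definition zero_freed :: "(nat \<Rightarrow> nat \<Rightarrow> real) \<Rightarrow> real \<Rightarrow> nat \<Rightarrow> nat \<Rightarrow> real" where
  "zero_freed B e = (\<lambda>y x. if B y x = 0 then e else B y x)"

definition nonnull_cols :: "nat \<Rightarrow> (nat \<Rightarrow> nat \<Rightarrow> real) \<Rightarrow> nat" where
  "nonnull_cols n B = card {x\<in>{..<n}. \<exists>y<n. B y x \<noteq> 0}"
definition nonnull_rows :: "nat \<Rightarrow> (nat \<Rightarrow> nat \<Rightarrow> real) \<Rightarrow> nat" where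
  "nonnull_rows n B = card {y\<in>{..<n}. \<exists>x<n. B y x \<noteq> 0}"

end

theory Submission
  imports Defs
begin

text \<open>
  Write \<open>B\<^sub>\<epsilon> = B + \<epsilon> D\<close> with \<open>D\<close> the 0/1 indicator matrix of the zero entries of \<open>B\<close>.
  Each of the three distributions of \<open>B\<^sub>\<epsilon>\<close> is a normalisation of weights
  \<open>c a + \<epsilon> d a\<close>, and its entropy is \<open>H\<^sup>+ - (z / S) \<epsilon> log \<epsilon> + o(\<epsilon> log \<epsilon>)\<close>, where
  \<open>S\<close> is the mass of \<open>B\<close> and \<open>z\<close> the \<open>d\<close>-weight of the atoms of zero \<open>c\<close>-mass:
  everything else in the entropy is differentiable in \<open>\<epsilon>\<close>.

  If \<open>H(X\<^sup>+)\<close> and \<open>H(Y\<^sup>+)\<close> are both positive, only the constant terms matter.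
  If \<open>H(Y\<^sup>+) = 0\<close>, then \<open>B\<close> has a single non-null row, so \<open>H((XY)\<^sup>+) = H(X\<^sup>+)\<close>
  and the constant terms cancel in the numerator of \<open>IA\<close>; the limit is then a ratio of
  first-order coefficients, i.e. of zero counts: \<open>n(n - l)\<close> zeros in null columns,
  \<open>n(n - 1)\<close> in null rows, \<open>n\<^sup>2 - l\<close> in all of \<open>B\<close>. This gives \<open>(n - l)/n\<close>.
  The case \<open>H(X\<^sup>+) = 0\<close> follows by transposition.
\<close>

lemma xlogx_tendsto_0: "((\<lambda>e::real. e * log 2 e) \<longlongrightarrow> 0) (at_right 0)"
proof -
  have "((\<lambda>e. ln (inverse e) / inverse e) \<longlongrightarrow> (0::real)) (at_right 0)"
    using filterlim_compose[OF ln_x_over_x_tendsto_0 filterlim_inverse_at_top_right] .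
  then have "((\<lambda>e. - (ln (inverse e) / inverse e) / ln 2) \<longlongrightarrow> - (0::real) / ln 2) (at_right 0)"
    by (intro tendsto_intros) auto
  moreover have "\<forall>\<^sub>F e in at_right 0. - (ln (inverse e) / inverse e) / ln 2 = e * log 2 (e::real)"
    by (auto simp: eventually_at_right_less log_def ln_inverse divide_inverse
        intro: eventually_mono[OF eventually_at_right_less])
  ultimately show ?thesis by (simp add: tendsto_cong)
qed

lemma eventually_xlogx_neg: "\<forall>\<^sub>F e in at_right (0::real). e * log 2 e < 0"
  unfolding eventually_at_right[OF zero_less_one] by (auto intro!: exI[of _ 1] mult_pos_neg)

lemma inverse_log_tendsto_0: "((\<lambda>e::real. inverse (log 2 e)) \<longlongrightarrow> 0) (at_right 0)"
proof -
  have "((\<lambda>e. ln 2 * inverse (ln e)) \<longlongrightarrow> (ln 2 * 0 :: real)) (at_right 0)"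
    by (intro tendsto_mult tendsto_const filterlim_compose[OF tendsto_inverse_0]
        filterlim_mono[OF ln_at_0 at_bot_le_at_infinity order_refl])
  then show ?thesis by (simp add: log_def divide_inverse mult.commute)
qed

lemma DERIV_diff_div_xlogx_tendsto_0:
  fixes F :: "real \<Rightarrow> real"
  assumes "(F has_real_derivative D) (at 0)"
  shows "((\<lambda>e. (F e - F 0) / (e * log 2 e)) \<longlongrightarrow> 0) (at_right 0)"
proof -
  have "((\<lambda>e. (F e - F 0) / e) \<longlongrightarrow> D) (at_right 0)"
    using assms unfolding has_field_derivative_iff using filterlim_at_split by fastforce
  moreover have "((\<lambda>e::real. inverse (log 2 e)) \<longlongrightarrow> 0) (at_right 0)"
    by (rule inverse_log_tendsto_0)
  ultimately have "((\<lambda>e. (F e - F 0) / e * inverse (log 2 e)) \<longlongrightarrow> D * 0) (at_right 0)"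
    by (rule tendsto_mult)
  then show ?thesis by (simp add: divide_inverse mult_ac)
qed

lemma tendsto_of_rate:
  fixes f g :: "'a \<Rightarrow> real"
  assumes "((\<lambda>x. (f x - L) / g x) \<longlongrightarrow> a) F" "(g \<longlongrightarrow> 0) F" "\<forall>\<^sub>F x in F. g x \<noteq> 0"
  shows "(f \<longlongrightarrow> L) F"
proof -
  have "((\<lambda>x. L + g x * ((f x - L) / g x)) \<longlongrightarrow> L + 0 * a) F"
    using assms by (intro tendsto_intros)
  moreover have "\<forall>\<^sub>F x in F. L + g x * ((f x - L) / g x) = f x"
    using assms(3) by eventually_elim simp
  ultimately show ?thesis by (simp add: tendsto_cong)
qed

lemma tendsto_of_xlogx_rate:
  fixes f :: "real \<Rightarrow> real"
  assumes "((\<lambda>e. (f e - L) / (e * log 2 e)) \<longlongrightarrow> a) (at_right 0)"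
  shows "(f \<longlongrightarrow> L) (at_right 0)"
  using assms xlogx_tendsto_0 eventually_mono[OF eventually_xlogx_neg]
  by (rule tendsto_of_rate) auto

text \<open>The shape of \<open>IA\<close> when \<open>H(Y\<^sup>+) = 0\<close>: \<open>f\<close>, \<open>g\<close>, \<open>h\<close> stand for the three entropies of
  \<open>B\<^sub>\<epsilon>\<close>, \<open>a\<close> for \<open>H(X\<^sup>+) = H((XY)\<^sup>+)\<close> and \<open>\<phi>\<close> for \<open>\<epsilon> log \<epsilon>\<close>.\<close>

lemma tendsto_min_ratio:
  fixes f g h \<phi> :: "'a \<Rightarrow> real"
  assumes \<phi>: "(\<phi> \<longlongrightarrow> 0) F" "\<forall>\<^sub>F x in F. \<phi> x < 0"
    and f: "((\<lambda>x. (f x - a) / \<phi> x) \<longlongrightarrow> \<alpha>) F"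
    and g: "((\<lambda>x. g x / \<phi> x) \<longlongrightarrow> \<beta>) F"
    and h: "((\<lambda>x. (h x - a) / \<phi> x) \<longlongrightarrow> \<gamma>) F"
    and "0 \<le> a" "\<beta> \<noteq> 0" "a = 0 \<Longrightarrow> \<alpha> \<le> \<beta>"
  shows "((\<lambda>x. (f x + g x - h x) / min (f x) (g x)) \<longlongrightarrow> (\<alpha> + \<beta> - \<gamma>) / \<beta>) F"
proof -
  have \<phi>_ne: "\<forall>\<^sub>F x in F. \<phi> x \<noteq> 0"
    using \<phi>(2) by eventually_elim simp
  have min: "((\<lambda>x. min (f x) (g x) / \<phi> x) \<longlongrightarrow> \<beta>) F"
  proof (cases "a = 0")
    case True
    have "((\<lambda>x. max (f x / \<phi> x) (g x / \<phi> x)) \<longlongrightarrow> max \<alpha> \<beta>) F"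
      using f g True by (intro tendsto_max) auto
    moreover have "\<forall>\<^sub>F x in F. max (f x / \<phi> x) (g x / \<phi> x) = min (f x) (g x) / \<phi> x"
      using \<phi>(2) by eventually_elim (auto simp: min_def max_def divide_le_cancel)
    ultimately show ?thesis
      using \<open>a = 0 \<Longrightarrow> \<alpha> \<le> \<beta>\<close> True by (simp add: max_absorb2 tendsto_cong)
  next
    case False
    have "(f \<longlongrightarrow> a) F" "(g \<longlongrightarrow> 0) F"
      using tendsto_of_rate[OF f \<phi>(1) \<phi>_ne] tendsto_of_rate[of g 0, OF _ \<phi>(1) \<phi>_ne] g by auto
    then have "((\<lambda>x. f x - g x) \<longlongrightarrow> a - 0) F"
      by (rule tendsto_diff)
    then have "\<forall>\<^sub>F x in F. g x < f x"
      using False \<open>0 \<le> a\<close> by (auto dest: order_tendstoD(1)[where a=0] elim: eventually_mono)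
    then have "\<forall>\<^sub>F x in F. g x / \<phi> x = min (f x) (g x) / \<phi> x"
      by eventually_elim simp
    with g show ?thesis by (simp add: tendsto_cong)
  qed
  have "((\<lambda>x. ((f x - a) / \<phi> x + g x / \<phi> x - (h x - a) / \<phi> x) / (min (f x) (g x) / \<phi> x))
      \<longlongrightarrow> (\<alpha> + \<beta> - \<gamma>) / \<beta>) F"
    using f g h min \<open>\<beta> \<noteq> 0\<close> by (intro tendsto_intros)
  moreover have "\<forall>\<^sub>F x in F. ((f x - a) / \<phi> x + g x / \<phi> x - (h x - a) / \<phi> x) / (min (f x) (g x) / \<phi> x)
      = (f x + g x - h x) / min (f x) (g x)"
    using \<phi>_ne
  proof eventually_elim
    case (elim x)
    then show ?case by (cases "min (f x) (g x) = 0") (simp_all add: field_simps)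
  qed
  ultimately show ?thesis by (rule Lim_transform_eventually)
qed

lemma entropy_plus_eq_entropy:
  assumes "finite A" "\<forall>a\<in>A. 0 \<le> p a"
  shows "entropy_plus A p = entropy A p"
  unfolding entropy_plus_def entropy_def using assms
  by (intro arg_cong[where f=uminus] sum.mono_neutral_left) force+

lemma entropy_plus_nonneg:
  assumes "finite A" "\<forall>a\<in>A. 0 \<le> p a" "sum p A = 1"
  shows "0 \<le> entropy_plus A p"
proof -
  have "p a * log 2 (p a) \<le> 0" if "a \<in> A" "0 < p a" for a
  proof -
    have "p a \<le> 1"
      using assms that member_le_sum[of a A p] by auto
    then show ?thesis using that by (simp add: mult_nonneg_nonpos)
  qed
  then show ?thesis
    unfolding entropy_plus_def by (auto intro: sum_nonpos)
qed

lemma entropy_plus_eq_0_imp_card_support: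
  assumes fin: "finite A" and nonneg: "\<forall>a\<in>A. 0 \<le> p a" and sum1: "sum p A = 1"
    and "entropy_plus A p = 0"
  shows "card {a\<in>A. 0 < p a} = 1"
proof -
  define S where "S = {a\<in>A. 0 < p a}"
  have "p a \<le> 1" if "a \<in> A" for a
    using assms that member_le_sum[of a A p] by auto
  then have "\<forall>a\<in>S. - (p a * log 2 (p a)) = 0"
    using \<open>entropy_plus A p = 0\<close> fin
    by (subst sum_nonneg_eq_0_iff[symmetric])
      (auto simp: S_def entropy_plus_def sum_negf mult_nonneg_nonpos)
  then have "\<forall>a\<in>S. p a = 1"
    by (auto simp: S_def log_def)
  then have "sum p S = card S"
    by simp
  moreover have "sum p A = sum p S"
    using fin nonneg by (intro sum.mono_neutral_right) (auto simp: S_def)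
  ultimately show ?thesis
    using sum1 by (simp add: S_def)
qed

lemma entropy_normalized:
  assumes "finite A" "\<forall>a\<in>A. 0 \<le> w a" "0 < sum w A"
  shows "entropy A (\<lambda>a. w a / sum w A) = log 2 (sum w A) - (\<Sum>a\<in>A. w a * log 2 (w a)) / sum w A"
proof -
  have "entropy A (\<lambda>a. w a / sum w A) =
      - (\<Sum>a\<in>A. w a * log 2 (w a) / sum w A - log 2 (sum w A) * (w a / sum w A))"
    unfolding entropy_def using assms
    by (intro arg_cong[where f=uminus] sum.cong refl) (auto simp: log_divide field_simps)
  also have "\<dots> = log 2 (sum w A) * (sum w A / sum w A) - (\<Sum>a\<in>A. w a * log 2 (w a)) / sum w A"
    by (simp only: sum_subtractf sum_divide_distrib[symmetric] sum_distrib_left[symmetric])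
  finally show ?thesis using assms by simp
qed

lemma entropy_perturbation_rate:
  fixes c d :: "'a \<Rightarrow> real"
  assumes fin: "finite A" and c: "\<forall>a\<in>A. 0 \<le> c a" and d: "\<forall>a\<in>A. 0 \<le> d a" and C: "0 < sum c A"
  shows "((\<lambda>e. (entropy A (\<lambda>a. (c a + d a * e) / (\<Sum>b\<in>A. c b + d b * e))
              - entropy_plus A (\<lambda>a. c a / sum c A)) / (e * log 2 e))
         \<longlongrightarrow> - (\<Sum>a\<in>{a\<in>A. c a = 0}. d a) / sum c A) (at_right 0)"
proof -
  define P where "P = {a\<in>A. c a \<noteq> 0}"
  define Z where "Z = {a\<in>A. c a = 0}"
  define W where "W e = (\<Sum>a\<in>A. c a + d a * e)" for e
  define G where "G e = (\<Sum>a\<in>P. (c a + d a * e) * log 2 (c a + d a * e)) + e * (\<Sum>a\<in>Z. d a * log 2 (d a))" for e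
  define F where "F e = log 2 (W e) - G e / W e" for e
  have A: "A = P \<union> Z" "P \<inter> Z = {}" "finite P" "finite Z"
    using fin by (auto simp: P_def Z_def)
  have W_pos: "0 < W e" if "0 \<le> e" for e
    unfolding W_def using C c d that by (simp add: sum.distrib add_pos_nonneg sum_nonneg)
  txt \<open>An atom of zero mass contributes \<open>(d e) log (d e) = e (d log d) + d (e log e)\<close>; the
    second summand is the only part of the entropy that is not differentiable at \<open>e = 0\<close>.\<close>
  have "(\<Sum>a\<in>A. (c a + d a * e) * log 2 (c a + d a * e)) = G e + (\<Sum>a\<in>Z. d a) * (e * log 2 e)"
    if "0 \<le> e" for e
  proof -
    have "(c a + d a * e) * log 2 (c a + d a * e) = e * (d a * log 2 (d a)) + d a * (e * log 2 e)"
      if "a \<in> Z" for a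
      using that \<open>0 \<le> e\<close> d by (cases "d a = 0 \<or> e = 0") (auto simp: Z_def log_mult algebra_simps)
    then show ?thesis
      using A by (simp add: G_def sum.union_disjoint sum.distrib sum_distrib_left sum_distrib_right)
  qed
  then have entropy_eq: "entropy A (\<lambda>a. (c a + d a * e) / W e) = F e - (\<Sum>a\<in>Z. d a) * (e * log 2 e) / W e"
    if "0 \<le> e" for e
    using entropy_normalized[of A "\<lambda>a. c a + d a * e"] W_pos[OF that] c d that fin
    by (simp add: W_def F_def diff_divide_distrib add_divide_distrib)
  have H0: "entropy_plus A (\<lambda>a. c a / sum c A) = F 0"
    using entropy_eq[of 0] c C fin by (simp add: W_def entropy_plus_eq_entropy)
  have "\<exists>D. (F has_real_derivative D) (at 0)"
    unfolding F_def G_def using W_pos[of 0] c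
    by (intro exI) (auto simp: W_def P_def intro!: derivative_eq_intros DERIV_sum add_pos_nonneg)
  then obtain D where "(F has_real_derivative D) (at 0)" by blast
  moreover have "(W \<longlongrightarrow> W 0) (at_right 0)"
    unfolding W_def by (intro tendsto_eq_intros) auto
  ultimately have "((\<lambda>e. (F e - F 0) / (e * log 2 e) - (\<Sum>a\<in>Z. d a) / W e)
      \<longlongrightarrow> 0 - (\<Sum>a\<in>Z. d a) / W 0) (at_right 0)"
    using W_pos[of 0] by (intro tendsto_intros DERIV_diff_div_xlogx_tendsto_0) auto
  moreover have "\<forall>\<^sub>F e in at_right 0. (F e - F 0) / (e * log 2 e) - (\<Sum>a\<in>Z. d a) / W e =
      (entropy A (\<lambda>a. (c a + d a * e) / W e) - entropy_plus A (\<lambda>a. c a / sum c A)) / (e * log 2 e)"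
    using eventually_xlogx_neg eventually_at_right_less[of 0]
  proof eventually_elim
    case (elim e)
    then have "e * log 2 e \<noteq> 0" "W e \<noteq> 0" using W_pos[of e] by auto
    then show ?case
      unfolding entropy_eq[OF less_imp_le[OF \<open>0 < e\<close>]] H0 by (simp add: field_simps)
  qed
  ultimately show ?thesis
    by (simp add: W_def Z_def tendsto_cong)
qed

definition transpose_matrix :: "(nat \<Rightarrow> nat \<Rightarrow> real) \<Rightarrow> nat \<Rightarrow> nat \<Rightarrow> real" where
  "transpose_matrix M y x = M x y"

lemma zero_freed_transpose: "zero_freed (transpose_matrix M) e = transpose_matrix (zero_freed M e)"
  by (simp add: zero_freed_def transpose_matrix_def fun_eq_iff)

lemma msum_transpose [simp]: "msum n (transpose_matrix M) = msum n M"
  unfolding msum_def transpose_matrix_def by (rule sum.swap)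

lemma pX_transpose [simp]: "pX n (transpose_matrix M) = pY n M"
  by (simp add: fun_eq_iff pX_def pY_def transpose_matrix_def)

lemma pY_transpose [simp]: "pY n (transpose_matrix M) = pX n M"
  by (simp add: fun_eq_iff pX_def pY_def transpose_matrix_def)

lemma HX_transpose [simp]: "HX n (transpose_matrix M) = HY n M"
  by (simp add: HX_def HY_def)

lemma HY_transpose [simp]: "HY n (transpose_matrix M) = HX n M"
  by (simp add: HX_def HY_def)

lemma HXY_transpose [simp]: "HXY n (transpose_matrix M) = HXY n M"
proof -
  have "(\<Sum>p\<in>{..<n}\<times>{..<n}. f (prod.swap p)) = (\<Sum>p\<in>{..<n}\<times>{..<n}. f p)" for f :: "nat \<times> nat \<Rightarrow> real"
    by (rule sum.reindex_bij_witness[where i=prod.swap and j=prod.swap]) auto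
  from this[of "\<lambda>p. pXY n M p * log 2 (pXY n M p)"] show ?thesis
    by (simp add: HXY_def entropy_def pXY_def transpose_matrix_def split_def)
qed

lemma IA_transpose [simp]: "IA n (transpose_matrix M) = IA n M"
  by (simp add: IA_def min.commute add.commute)

lemma HX_plus_transpose [simp]: "HX_plus n (transpose_matrix M) = HY_plus n M"
  by (simp add: HX_plus_def HY_plus_def)

lemma HY_plus_transpose [simp]: "HY_plus n (transpose_matrix M) = HX_plus n M"
  by (simp add: HX_plus_def HY_plus_def)

lemma nonnull_cols_transpose [simp]: "nonnull_cols n (transpose_matrix M) = nonnull_rows n M"
  by (simp add: nonnull_cols_def nonnull_rows_def transpose_matrix_def)

lemma nonnull_rows_transpose [simp]: "nonnull_rows n (transpose_matrix M) = nonnull_cols n M"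
  by (simp add: nonnull_cols_def nonnull_rows_def transpose_matrix_def)

lemma msum_pos:
  assumes "\<forall>y<n. \<forall>x<n. 0 \<le> B y x" "\<exists>y<n. \<exists>x<n. B y x \<noteq> 0"
  shows "0 < msum n B"
proof -
  obtain y0 x0 where "y0 < n" "x0 < n" "B y0 x0 \<noteq> 0"
    using assms(2) by blast
  with assms(1) have "0 < (\<Sum>x<n. B y0 x)"
    by (intro sum_pos2[where i=x0]) force+
  with assms(1) \<open>y0 < n\<close> show ?thesis
    unfolding msum_def by (intro sum_pos2[where i=y0 and f="\<lambda>y. \<Sum>x<n. B y x"]) (auto intro: sum_nonneg)
qed

lemma pY_distribution:
  assumes "\<forall>y<n. \<forall>x<n. 0 \<le> B y x" "0 < msum n B"
  shows "\<forall>y\<in>{..<n}. 0 \<le> pY n B y" "sum (pY n B) {..<n} = 1"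
  using assms by (auto simp: pY_def msum_def sum_divide_distrib[symmetric] intro!: sum_nonneg divide_nonneg_pos)

lemma HY_plus_nonneg:
  assumes "\<forall>y<n. \<forall>x<n. 0 \<le> B y x" "0 < msum n B"
  shows "0 \<le> HY_plus n B"
  unfolding HY_plus_def using pY_distribution[OF assms] by (intro entropy_plus_nonneg) auto

lemma HX_plus_nonneg:
  assumes "\<forall>y<n. \<forall>x<n. 0 \<le> B y x" "0 < msum n B"
  shows "0 \<le> HX_plus n B"
  using HY_plus_nonneg[of n "transpose_matrix B"] assms by (simp add: transpose_matrix_def)

lemma HY_plus_eq_0_imp_nonnull_rows:
  assumes nonneg: "\<forall>y<n. \<forall>x<n. 0 \<le> B y x" and pos: "0 < msum n B" and "HY_plus n B = 0"
  shows "nonnull_rows n B = 1"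
proof -
  have "0 < pY n B y \<longleftrightarrow> (\<exists>x<n. B y x \<noteq> 0)" if "y < n" for y
  proof -
    have "0 \<le> (\<Sum>x<n. B y x)"
      using nonneg that by (intro sum_nonneg) auto
    moreover have "(\<Sum>x<n. B y x) = 0 \<longleftrightarrow> (\<forall>x<n. B y x = 0)"
      using nonneg that by (subst sum_nonneg_eq_0_iff) auto
    ultimately show ?thesis
      using pos by (auto simp: pY_def zero_less_divide_iff less_le)
  qed
  then have "{y\<in>{..<n}. 0 < pY n B y} = {y\<in>{..<n}. \<exists>x<n. B y x \<noteq> 0}"
    by auto
  with entropy_plus_eq_0_imp_card_support[of "{..<n}" "pY n B"] pY_distribution[OF nonneg pos] assms
  show ?thesis
    by (simp add: nonnull_rows_def HY_plus_def)
qed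

lemma zero_freed_0 [simp]: "zero_freed B 0 = B"
  by (simp add: zero_freed_def fun_eq_iff)

lemma zero_freed_eq_add: "zero_freed B e y x = B y x + of_bool (B y x = 0) * e"
  by (simp add: zero_freed_def)

lemma msum_eq_sum_entries: "msum n M = (\<Sum>(y, x)\<in>{..<n}\<times>{..<n}. M y x)"
  by (simp add: msum_def sum.cartesian_product)

lemma HX_zero_freed_rate:
  assumes nonneg: "\<forall>y<n. \<forall>x<n. 0 \<le> B y x" and pos: "0 < msum n B"
  shows "((\<lambda>e. (HX n (zero_freed B e) - HX_plus n B) / (e * log 2 e))
    \<longlongrightarrow> - (real n * (real n - real (nonnull_cols n B))) / msum n B) (at_right 0)"
proof -
  define c where "c x = (\<Sum>y<n. B y x)" for x
  define d where "d x = (\<Sum>y<n. of_bool (B y x = 0) :: real)" for x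
  have col_sum: "(\<Sum>y<n. zero_freed B e y x) = c x + d x * e" for e x
    by (simp add: zero_freed_eq_add c_def d_def sum.distrib sum_distrib_right)
  have msum_eq: "msum n (zero_freed B e) = (\<Sum>x<n. c x + d x * e)" for e
    unfolding msum_def by (subst sum.swap) (simp add: col_sum)
  have pX_eq: "pX n (zero_freed B e) = (\<lambda>x. (c x + d x * e) / (\<Sum>x<n. c x + d x * e))" for e
    by (simp add: fun_eq_iff pX_def col_sum msum_eq)
  define N where "N = {x\<in>{..<n}. \<exists>y<n. B y x \<noteq> 0}"
  have "c x = 0 \<longleftrightarrow> x \<notin> N" if "x < n" for x
    using nonneg that unfolding c_def N_def by (subst sum_nonneg_eq_0_iff) auto
  then have null_cols: "{x\<in>{..<n}. c x = 0} = {..<n} - N"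
    by auto
  have "N \<subseteq> {..<n}" "nonnull_cols n B = card N"
    by (auto simp: N_def nonnull_cols_def)
  then have "real (card ({..<n} - N)) = real n - real (nonnull_cols n B)"
    using card_mono[of "{..<n}" N] by (simp add: card_Diff_subset finite_subset)
  moreover have "d x = real n" if "x \<in> {..<n} - N" for x
    using that by (simp add: d_def N_def)
  ultimately have "(\<Sum>x\<in>{x\<in>{..<n}. c x = 0}. d x) = real n * (real n - real (nonnull_cols n B))"
    unfolding null_cols by simp
  moreover have "sum c {..<n} = msum n B"
    using msum_eq[of 0] by simp
  moreover have "\<forall>x\<in>{..<n}. 0 \<le> c x" "\<forall>x\<in>{..<n}. 0 \<le> d x"
    using nonneg by (auto simp: c_def d_def intro: sum_nonneg)
  ultimately show ?thesis
    using entropy_perturbation_rate[of "{..<n}" c d] pos pX_eq[of 0]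
    by (simp add: HX_def HX_plus_def pX_eq)
qed

lemma HY_zero_freed_rate:
  assumes "\<forall>y<n. \<forall>x<n. 0 \<le> B y x" "0 < msum n B"
  shows "((\<lambda>e. (HY n (zero_freed B e) - HY_plus n B) / (e * log 2 e))
    \<longlongrightarrow> - (real n * (real n - real (nonnull_rows n B))) / msum n B) (at_right 0)"
  using HX_zero_freed_rate[of n "transpose_matrix B"] assms
  by (simp add: zero_freed_transpose transpose_matrix_def)

lemma HXY_zero_freed_rate:
  assumes nonneg: "\<forall>y<n. \<forall>x<n. 0 \<le> B y x" and pos: "0 < msum n B"
  shows "((\<lambda>e. (HXY n (zero_freed B e) - HXY_plus n B) / (e * log 2 e))
    \<longlongrightarrow> - real (card {(y, x)\<in>{..<n}\<times>{..<n}. B y x = 0}) / msum n B) (at_right 0)"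
proof -
  define A where "A = {..<n} \<times> {..<n}"
  define c where "c p = B (fst p) (snd p)" for p
  define d where "d p = (of_bool (c p = 0) :: real)" for p
  have msum_eq: "msum n (zero_freed B e) = (\<Sum>p\<in>A. c p + d p * e)" for e
    by (simp add: msum_eq_sum_entries A_def c_def d_def zero_freed_eq_add split_def)
  have pXY_eq: "pXY n (zero_freed B e) = (\<lambda>p. (c p + d p * e) / (\<Sum>p\<in>A. c p + d p * e))" for e
    by (simp add: fun_eq_iff pXY_def msum_eq c_def d_def zero_freed_eq_add)
  have zero_set: "{p\<in>A. c p = 0} = {(y, x)\<in>{..<n}\<times>{..<n}. B y x = 0}"
    by (auto simp: A_def c_def)
  have "(\<Sum>p\<in>{p\<in>A. c p = 0}. d p) = real (card {(y, x)\<in>{..<n}\<times>{..<n}. B y x = 0})"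
    unfolding zero_set[symmetric] by (simp add: d_def)
  moreover have "sum c A = msum n B"
    using msum_eq[of 0] by simp
  moreover have "\<forall>p\<in>A. 0 \<le> c p" "\<forall>p\<in>A. 0 \<le> d p"
    using nonneg by (auto simp: A_def c_def d_def)
  ultimately show ?thesis
    using entropy_perturbation_rate[of A c d] pos pXY_eq[of 0]
    by (simp add: HXY_def HXY_plus_def pXY_eq A_def)
qed

lemma IA_zero_freed_tendsto:
  assumes "\<forall>y<n. \<forall>x<n. 0 \<le> B y x" "0 < msum n B" "0 < HX_plus n B" "0 < HY_plus n B"
  shows "((\<lambda>e. IA n (zero_freed B e))
    \<longlongrightarrow> (HX_plus n B + HY_plus n B - HXY_plus n B) / min (HX_plus n B) (HY_plus n B)) (at_right 0)"
  unfolding IA_def using assms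
  by (intro tendsto_intros tendsto_of_xlogx_rate[OF HX_zero_freed_rate]
      tendsto_of_xlogx_rate[OF HY_zero_freed_rate] tendsto_of_xlogx_rate[OF HXY_zero_freed_rate]) auto

lemma HXY_plus_single_row:
  assumes "r < n" and null_rows: "\<forall>y<n. \<forall>x<n. y \<noteq> r \<longrightarrow> B y x = 0"
  shows "HXY_plus n B = HX_plus n B"
proof -
  have pXY_row: "pXY n B (y, x) = (if y = r then pX n B x else 0)" if "y < n" "x < n" for y x
  proof -
    have "(\<Sum>y<n. B y x) = (\<Sum>y\<in>{r}. B y x)"
      using null_rows \<open>r < n\<close> that by (intro sum.mono_neutral_right) auto
    then show ?thesis
      using null_rows that by (simp add: pXY_def pX_def)
  qed
  then have "{p\<in>{..<n}\<times>{..<n}. 0 < pXY n B p} = Pair r ` {x\<in>{..<n}. 0 < pX n B x}"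
    using \<open>r < n\<close> by (auto simp: image_iff split: if_splits)
  then show ?thesis
    unfolding HXY_plus_def HX_plus_def entropy_plus_def
    using \<open>r < n\<close> by (simp add: sum.reindex inj_on_def) (rule sum.cong; simp add: pXY_row)
qed

lemma card_zero_entries_single_row:
  assumes "r < n" and null_rows: "\<forall>y<n. \<forall>x<n. y \<noteq> r \<longrightarrow> B y x = 0"
  shows "real (card {(y, x)\<in>{..<n}\<times>{..<n}. B y x = 0}) = real n * real n - real (nonnull_cols n B)"
proof -
  define NZ where "NZ = {(y, x)\<in>{..<n}\<times>{..<n}. B y x \<noteq> 0}"
  have "NZ = {r} \<times> {x\<in>{..<n}. \<exists>y<n. B y x \<noteq> 0}"
    using assms by (auto simp: NZ_def)
  then have "card NZ = nonnull_cols n B"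
    by (simp add: nonnull_cols_def card_cartesian_product_singleton)
  moreover have "NZ \<subseteq> {..<n}\<times>{..<n}" "{(y, x)\<in>{..<n}\<times>{..<n}. B y x = 0} = {..<n}\<times>{..<n} - NZ"
    by (auto simp: NZ_def)
  ultimately show ?thesis
    using card_mono[of "{..<n}\<times>{..<n}" NZ]
    by (simp add: card_Diff_subset finite_subset card_cartesian_product)
qed

lemma IA_zero_freed_tendsto_single_row:
  assumes "2 \<le> n" and nonneg: "\<forall>y<n. \<forall>x<n. 0 \<le> B y x" and pos: "0 < msum n B"
    and "HY_plus n B = 0"
  shows "((\<lambda>e. IA n (zero_freed B e)) \<longlongrightarrow> (real n - real (nonnull_cols n B)) / real n) (at_right 0)"
proof -
  define l where "l = nonnull_cols n B"
  define S where "S = msum n B"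
  obtain r where "{y\<in>{..<n}. \<exists>x<n. B y x \<noteq> 0} = {r}"
    using HY_plus_eq_0_imp_nonnull_rows[OF nonneg pos] assms(4)
    by (auto simp: nonnull_rows_def card_1_singleton_iff)
  then have "r < n" and null_rows: "\<forall>y<n. \<forall>x<n. y \<noteq> r \<longrightarrow> B y x = 0"
    by auto
  note HXY_eq = HXY_plus_single_row[OF \<open>r < n\<close> null_rows]
  note zeros = card_zero_entries_single_row[OF \<open>r < n\<close> null_rows]
  define \<alpha> where "\<alpha> = - (real n * (real n - real l)) / S"
  define \<beta> where "\<beta> = - (real n * (real n - 1)) / S"
  define \<gamma> where "\<gamma> = - (real n * real n - real l) / S"
  have HX_rate: "((\<lambda>e. (HX n (zero_freed B e) - HX_plus n B) / (e * log 2 e)) \<longlongrightarrow> \<alpha>) (at_right 0)"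
    using HX_zero_freed_rate[OF nonneg pos] by (simp add: \<alpha>_def l_def S_def)
  have HY_rate: "((\<lambda>e. HY n (zero_freed B e) / (e * log 2 e)) \<longlongrightarrow> \<beta>) (at_right 0)"
    using HY_zero_freed_rate[OF nonneg pos] HY_plus_eq_0_imp_nonnull_rows[OF nonneg pos] \<open>HY_plus n B = 0\<close>
    by (simp add: \<beta>_def S_def)
  have HXY_rate: "((\<lambda>e. (HXY n (zero_freed B e) - HX_plus n B) / (e * log 2 e)) \<longlongrightarrow> \<gamma>) (at_right 0)"
    using HXY_zero_freed_rate[OF nonneg pos] unfolding zeros HXY_eq by (simp add: \<gamma>_def S_def l_def)
  have "HX_plus n B = 0 \<Longrightarrow> l = 1"
    using HY_plus_eq_0_imp_nonnull_rows[of n "transpose_matrix B"] nonneg pos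
    by (simp add: l_def transpose_matrix_def)
  then have "HX_plus n B = 0 \<Longrightarrow> \<alpha> \<le> \<beta>"
    by (simp add: \<alpha>_def \<beta>_def)
  moreover have "0 \<le> HX_plus n B"
    using HX_plus_nonneg[OF nonneg pos] .
  moreover have "\<beta> \<noteq> 0"
    using \<open>2 \<le> n\<close> pos by (simp add: \<beta>_def S_def)
  ultimately have "((\<lambda>e. IA n (zero_freed B e)) \<longlongrightarrow> (\<alpha> + \<beta> - \<gamma>) / \<beta>) (at_right 0)"
    unfolding IA_def
    by (intro tendsto_min_ratio[OF xlogx_tendsto_0 eventually_xlogx_neg HX_rate HY_rate HXY_rate]) auto
  moreover have "(\<alpha> + \<beta> - \<gamma>) / \<beta> = (real n - real l) / real n"
    using \<open>2 \<le> n\<close> pos by (simp add: \<alpha>_def \<beta>_def \<gamma>_def S_def field_simps)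
  ultimately show ?thesis
    by (simp add: l_def)
qed

theorem corollary1:
  fixes n :: nat and B :: "nat \<Rightarrow> nat \<Rightarrow> real"
  assumes "n \<ge> 2"
    and "\<forall>y<n. \<forall>x<n. B y x \<ge> 0"
    and "\<exists>y<n. \<exists>x<n. B y x \<noteq> 0"
  shows "\<exists>L. ((\<lambda>e. IA n (zero_freed B e)) \<longlongrightarrow> L) (at_right 0) \<and>
    (HY_plus n B = 0 \<longrightarrow> L = (real n - real (nonnull_cols n B)) / real n) \<and>
    (HX_plus n B = 0 \<longrightarrow> L = (real n - real (nonnull_rows n B)) / real n) \<and>
    (0 < HX_plus n B \<and> HX_plus n B \<le> HY_plus n B \<longrightarrow>
       L = 1 + (HY_plus n B - HXY_plus n B) / HX_plus n B) \<and>
    (0 < HY_plus n B \<and> HY_plus n B \<le> HX_plus n B \<longrightarrow>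
       L = 1 + (HX_plus n B - HXY_plus n B) / HY_plus n B)"
proof -
  note nonneg = assms(2)
  have pos: "0 < msum n B"
    using msum_pos[OF assms(2,3)] .
  have rows: "((\<lambda>e. IA n (zero_freed B e)) \<longlongrightarrow> (real n - real (nonnull_cols n B)) / real n) (at_right 0)"
    if "HY_plus n B = 0"
    using IA_zero_freed_tendsto_single_row[OF assms(1) nonneg pos that] .
  have cols: "((\<lambda>e. IA n (zero_freed B e)) \<longlongrightarrow> (real n - real (nonnull_rows n B)) / real n) (at_right 0)"
    if "HX_plus n B = 0"
    using IA_zero_freed_tendsto_single_row[of n "transpose_matrix B"] assms(1) nonneg pos that
    by (simp add: zero_freed_transpose transpose_matrix_def)
  consider "HY_plus n B = 0" | "HX_plus n B = 0" "0 < HY_plus n B" | "0 < HX_plus n B" "0 < HY_plus n B"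
    using HX_plus_nonneg[OF nonneg pos] HY_plus_nonneg[OF nonneg pos] by linarith
  then show ?thesis
  proof cases
    case 1
    then show ?thesis
      using rows cols tendsto_unique[OF trivial_limit_at_right_real rows cols] by auto
  next
    case 2
    then show ?thesis
      using cols by auto
  next
    case 3
    then show ?thesis
      using IA_zero_freed_tendsto[OF nonneg pos 3]
      by (intro exI[of _ "(HX_plus n B + HY_plus n B - HXY_plus n B) / min (HX_plus n B) (HY_plus n B)"])
        (auto simp: min_def field_simps)
  qed
qed

end
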